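(* For any fixed $\theta\in\mathbb R$, the function $t\mapsto G_\theta(t)$ is $C^\infty$ and strictly positive on $(0,1]$, and as $t\downarrow0$, $$G_\theta(t)=\frac{1}{t(\log\frac1t)^2}\Big\{1+\frac{2\theta}{\log\frac1t}+O\Big(\frac{1}{(\log\frac1t)^2}\Big)\Big\}.$$
   Context: For $\theta\in\mathbb R$ and $t\in(0,1]$, $G_\theta(t):=\int_0^\infty\frac{e^{(\theta-\gamma)s}\,s\,t^{s-1}}{\Gamma(s+1)}\,\mathrm ds$, where $\gamma$ is the Euler–Mascheroni constant; equivalently $G_\theta(t)=\int_0^\infty e^{\theta s}f_s(t)\mathrm ds$ with $f_s$ the density of $Y_s$ for the Dickman subordinator $Y$ (pure-jump subordinator with Lévy measure $\frac1t\mathbf 1_{(0,1)}(t)\mathrm dt$). *)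

theory Defs
  imports "HOL-Analysis.Analysis" "HOL-Library.Landau_Symbols"
begin

definition G :: "real \<Rightarrow> real \<Rightarrow> real" where
  "G \<theta> t = (LINT s:{0<..}|lborel.
      exp ((\<theta> - euler_mascheroni) * s) * s * t powr (s - 1) / Gamma (s + 1))"

definition C_infinity_on :: "(real \<Rightarrow> real) \<Rightarrow> real set \<Rightarrow> bool" where
  "C_infinity_on f S \<longleftrightarrow>
     (\<exists>D :: nat \<Rightarrow> real \<Rightarrow> real. (\<forall>x\<in>S. D 0 x = f x) \<and>
        (\<forall>n. \<forall>x\<in>S. (D n has_real_derivative D (Suc n) x) (at x within S)))"

end

theory Submission
  imports Defs "HOL-Probability.Distributions" "HOL-Real_Asymp.Real_Asymp"
begin

text \<open>
  Write G(t) = \<integral> s \<phi>(s) t^(s-1) ds over s > 0, with \<phi>(s) = exp((\<theta> - \<gamma>) s) / \<Gamma>(s+1).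
  Since 1/\<Gamma>(s+1) decays faster than any exponential, every t-derivative of the integrand
  is dominated uniformly for t in a compact subset of (0,\<infinity>), so G can be differentiated under
  the integral sign arbitrarily often; the integrand is positive.
  With L = log(1/t) we have t G(t) = \<integral> s \<phi>(s) exp(-L s) ds, a Laplace transform.
  As \<phi>(0) = 1 and \<phi>'(0) = \<theta> - \<gamma> - \<psi>(1) = \<theta>, Taylor's theorem gives
  |\<phi>(s) - 1 - \<theta> s| \<le> K s^2 exp(B s), and integrating against s exp(-L s) turns this into
  t G(t) = 1/L^2 + 2\<theta>/L^3 + O(1/L^4).
\<close>

lemma has_bochner_integral_power_times_exp:
  fixes l :: real
  assumes l: "0 < l"
  shows "has_bochner_integral lborel
    (\<lambda>x. indicator {0<..} x *\<^sub>R (x ^ i * exp (- (l * x)))) (fact i / l ^ Suc i)"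
proof (rule has_bochner_integral_nn_integral)
  have "AE x in lborel. ennreal (indicator {0<..} x *\<^sub>R (x ^ i * exp (- (l * x))))
      = ennreal (1 / l) * ennreal (erlang_density 0 l x * x ^ i)"
    using AE_lborel_singleton[of 0] by eventually_elim
      (use l in \<open>auto simp: erlang_density_def ennreal_mult'[symmetric] split: split_indicator\<close>)
  then have "(\<integral>\<^sup>+x. ennreal (indicator {0<..} x *\<^sub>R (x ^ i * exp (- (l * x)))) \<partial>lborel)
      = (\<integral>\<^sup>+x. ennreal (1 / l) * ennreal (erlang_density 0 l x * x ^ i) \<partial>lborel)"
    by (rule nn_integral_cong_AE)
  also have "\<dots> = ennreal (1 / l) * ennreal (fact i / l ^ i)"
    using l by (simp add: nn_integral_cmult nn_integral_erlang_ith_moment)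
  also have "\<dots> = ennreal (fact i / l ^ Suc i)"
    using l by (simp add: ennreal_mult'[symmetric])
  finally show "(\<integral>\<^sup>+x. ennreal (indicator {0<..} x *\<^sub>R (x ^ i * exp (- (l * x)))) \<partial>lborel)
      = ennreal (fact i / l ^ Suc i)" .
qed (use l in \<open>auto split: split_indicator\<close>)

lemma
  fixes l :: real
  assumes "0 < l"
  shows set_integrable_power_times_exp: "set_integrable lborel {0<..} (\<lambda>x. x ^ i * exp (- (l * x)))"
    and set_integral_power_times_exp: "(LINT x:{0<..}|lborel. x ^ i * exp (- (l * x))) = fact i / l ^ Suc i"
  using has_bochner_integral_power_times_exp[OF assms, of i]
  unfolding set_integrable_def set_lebesgue_integral_def
  by (auto simp: has_bochner_integral_iff)

lemma powr_times_exp_le_Gamma: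
  fixes s M :: real
  assumes s: "0 \<le> s" and M: "0 < M"
  shows "M powr s * exp (- (M + 1)) \<le> Gamma (s + 1)"
proof -
  have "ennreal (M powr s * exp (- (M + 1)))
      = (\<integral>\<^sup>+x. ennreal (M powr s * exp (- (M + 1))) * indicator {M..M+1} x \<partial>lborel)"
    by (subst nn_integral_cmult_indicator) auto
  also have "\<dots> \<le> (\<integral>\<^sup>+x. ennreal (indicator {0..} x * x powr (s + 1 - 1) / exp x) \<partial>lborel)"
  proof (intro nn_integral_mono)
    fix x :: real
    have "M powr s * exp (- (M + 1)) \<le> x powr s * exp (- x)" if "M \<le> x" "x \<le> M + 1"
      using that M s by (intro mult_mono powr_mono2) auto
    then have "M powr s * exp (- (M + 1)) \<le> x powr s / exp x" if "M \<le> x" "x \<le> M + 1"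
      using that by (simp add: exp_minus field_simps)
    then show "ennreal (M powr s * exp (- (M + 1))) * indicator {M..M+1} x
        \<le> ennreal (indicator {0..} x * x powr (s + 1 - 1) / exp x)"
      using M by (auto intro: ennreal_leI split: split_indicator)
  qed
  also have "\<dots> = ennreal (Gamma (s + 1))"
    using Gamma_conv_nn_integral_real[of "s + 1"] s by simp
  finally show ?thesis
    using s by (subst (asm) ennreal_le_iff) auto
qed

lemma rGamma_le_exp_powr:
  fixes s M :: real
  assumes "0 \<le> s" and "0 < M"
  shows "rGamma (s + 1) \<le> exp (M + 1) * M powr (- s)"
proof -
  have "rGamma (s + 1) \<le> 1 / (M powr s * exp (- (M + 1)))"
    unfolding rGamma_inverse_Gamma inverse_eq_divide
    using assms powr_times_exp_le_Gamma[OF assms] by (intro divide_left_mono) auto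
  also have "\<dots> = exp (M + 1) * M powr (- s)"
    by (simp add: powr_minus divide_inverse exp_minus[of "M + 1"] del: minus_add_distrib)
  finally show ?thesis .
qed

lemma rGamma_Suc_pos: "0 \<le> s \<Longrightarrow> 0 < rGamma (s + 1 :: real)"
  by (simp add: rGamma_inverse_Gamma)

lemma set_integrable_exp_rGamma_bounded:
  fixes f :: "real \<Rightarrow> real"
  assumes cont: "continuous_on {0<..} f"
    and bound: "\<And>s. 0 < s \<Longrightarrow> \<bar>f s\<bar> \<le> C * exp (B * s) * rGamma (s + 1)"
  shows "set_integrable lborel {0<..} f"
proof (rule set_integrable_bound)
  define M where "M = exp (B + 1)"
  show "set_integrable lborel {0<..} (\<lambda>s. (\<bar>C\<bar> * exp (M + 1)) * (s ^ 0 * exp (- (1 * s))))"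
    by (intro set_integrable_mult_right set_integrable_power_times_exp) auto
  show "set_borel_measurable lborel {0<..} f"
    unfolding set_borel_measurable_def
    using borel_measurable_continuous_on_indicator[OF _ cont] by simp
  show "AE s in lborel. s \<in> {0<..} \<longrightarrow>
      norm (f s) \<le> norm (\<bar>C\<bar> * exp (M + 1) * (s ^ 0 * exp (- (1 * s))))"
  proof (intro AE_I2 impI)
    fix s :: real
    assume "s \<in> {0<..}"
    then have s: "0 < s" by simp
    have "\<bar>f s\<bar> \<le> C * exp (B * s) * rGamma (s + 1)"
      by (rule bound[OF s])
    also have "\<dots> \<le> \<bar>C\<bar> * exp (B * s) * rGamma (s + 1)"
      using rGamma_Suc_pos[of s] s by (intro mult_right_mono) auto
    also have "\<dots> \<le> \<bar>C\<bar> * exp (B * s) * (exp (M + 1) * M powr (- s))"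
      using s by (intro mult_left_mono rGamma_le_exp_powr) (auto simp: M_def)
    also have "\<dots> = \<bar>C\<bar> * exp (M + 1) * exp (- s)"
      by (simp add: M_def powr_def exp_add[symmetric] algebra_simps)
    finally show "norm (f s) \<le> norm (\<bar>C\<bar> * exp (M + 1) * (s ^ 0 * exp (- (1 * s))))"
      by simp
  qed
qed

lemma tendsto_integral_dominated_at:
  fixes S :: "real \<Rightarrow> 'a \<Rightarrow> 'b::{banach, second_countable_topology}"
  assumes "f \<in> borel_measurable M" and "integrable M w"
    and bound: "\<forall>\<^sub>F t in at x. S t \<in> borel_measurable M \<and> (AE y in M. norm (S t y) \<le> w y)"
    and lim: "AE y in M. ((\<lambda>t. S t y) \<longlongrightarrow> f y) (at x)"
  shows "((\<lambda>t. integral\<^sup>L M (S t)) \<longlongrightarrow> integral\<^sup>L M f) (at x)"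
  unfolding tendsto_at_iff_sequentially comp_def
proof (intro allI impI)
  fix X :: "nat \<Rightarrow> real"
  assume "\<forall>i. X i \<in> UNIV - {x}" and "X \<longlonglongrightarrow> x"
  then have X: "filterlim X (at x) sequentially"
    by (auto simp: filterlim_at)
  from filterlim_iff[THEN iffD1, OF X, rule_format, OF bound]
  obtain N where N: "\<And>n. N \<le> n \<Longrightarrow>
      S (X n) \<in> borel_measurable M \<and> (AE y in M. norm (S (X n) y) \<le> w y)"
    by (auto simp: eventually_sequentially)
  show "(\<lambda>n. integral\<^sup>L M (S (X n))) \<longlonglongrightarrow> integral\<^sup>L M f"
  proof (rule LIMSEQ_offset, rule integral_dominated_convergence)
    show "AE y in M. (\<lambda>n. S (X (n + N)) y) \<longlonglongrightarrow> f y"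
      using lim by eventually_elim
        (auto intro: LIMSEQ_ignore_initial_segment filterlim_compose[OF _ X])
  qed (use \<open>f \<in> borel_measurable M\<close> \<open>integrable M w\<close> N in auto)
qed

lemma has_real_derivative_integral_dominated:
  fixes F F' :: "real \<Rightarrow> 'a \<Rightarrow> real"
  assumes x: "x \<in> {a<..<b}"
    and integrable: "\<And>t. t \<in> {a<..<b} \<Longrightarrow> integrable M (F t)"
    and "F' x \<in> borel_measurable M"
    and deriv: "\<And>t y. t \<in> {a<..<b} \<Longrightarrow> ((\<lambda>t. F t y) has_real_derivative F' t y) (at t)"
    and bound: "\<And>t y. t \<in> {a<..<b} \<Longrightarrow> \<bar>F' t y\<bar> \<le> w y"
    and "integrable M w"
  shows "((\<lambda>t. integral\<^sup>L M (F t)) has_real_derivative integral\<^sup>L M (F' x)) (at x)"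
  unfolding has_field_derivative_iff
proof -
  define Q where "Q t y = (F t y - F x y) / (t - x)" for t y
  have near: "\<forall>\<^sub>F t in at x. t \<in> {a<..<b} - {x}"
    using x by (intro eventually_at_in_open) auto
  have "((\<lambda>t. integral\<^sup>L M (Q t)) \<longlongrightarrow> integral\<^sup>L M (F' x)) (at x)"
  proof (rule tendsto_integral_dominated_at)
    show "\<forall>\<^sub>F t in at x. Q t \<in> borel_measurable M \<and> (AE y in M. norm (Q t y) \<le> w y)"
      using near
    proof eventually_elim
      case (elim t)
      have "\<bar>F t y - F x y\<bar> \<le> w y * \<bar>t - x\<bar>" for y
        using field_differentiable_bound[of "{a<..<b}" "\<lambda>t. F t y" "\<lambda>t. F' t y" "w y" t x]
          deriv bound x elim by (auto intro: has_field_derivative_at_within)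
      then show ?case
        using elim x integrable unfolding Q_def
        by (auto simp: abs_divide divide_le_eq intro!: borel_measurable_integrable)
    qed
    show "AE y in M. ((\<lambda>t. Q t y) \<longlongrightarrow> F' x y) (at x)"
      using deriv[OF x] by (simp add: Q_def has_field_derivative_iff)
  qed fact+
  moreover have "\<forall>\<^sub>F t in at x. integral\<^sup>L M (Q t) = (integral\<^sup>L M (F t) - integral\<^sup>L M (F x)) / (t - x)"
    using near by eventually_elim (use x integrable in \<open>simp add: Q_def[abs_def]\<close>)
  ultimately show "((\<lambda>t. (integral\<^sup>L M (F t) - integral\<^sup>L M (F x)) / (t - x)) \<longlongrightarrow> integral\<^sup>L M (F' x)) (at x)"
    by (rule Lim_transform_eventually)
qed

lemma set_integral_pos:
  fixes f :: "'a \<Rightarrow> real"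
  assumes "set_integrable M A f" and "A \<in> sets M" and "A \<notin> null_sets M"
    and pos: "\<And>x. x \<in> A \<Longrightarrow> 0 < f x"
  shows "0 < (LINT x:A|M. f x)"
proof -
  let ?g = "\<lambda>x. indicator A x *\<^sub>R f x"
  have integrable: "integrable M ?g" and nonneg: "AE x in M. 0 \<le> ?g x"
    using assms(1) pos unfolding set_integrable_def
    by (auto intro!: AE_I2 less_imp_le split: split_indicator)
  have "integral\<^sup>L M ?g \<noteq> 0"
  proof
    assume "integral\<^sup>L M ?g = 0"
    then have "AE x in M. ?g x = 0"
      using integral_nonneg_eq_0_iff_AE[OF integrable nonneg] by simp
    then have "AE x in M. x \<notin> A"
      by eventually_elim (use pos in \<open>force split: split_indicator\<close>)
    with \<open>A \<in> sets M\<close> \<open>A \<notin> null_sets M\<close> show False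
      by (simp add: AE_iff_null_sets)
  qed
  moreover have "0 \<le> integral\<^sup>L M ?g"
    using nonneg by (rule integral_nonneg_AE)
  ultimately show ?thesis
    unfolding set_lebesgue_integral_def by simp
qed

definition dickman_weight :: "real \<Rightarrow> real \<Rightarrow> real" where
  "dickman_weight \<theta> s = exp ((\<theta> - euler_mascheroni) * s) * rGamma (s + 1)"

definition power_deriv_coeff :: "nat \<Rightarrow> real \<Rightarrow> real" where
  "power_deriv_coeff n s = (\<Prod>i<n. s - 1 - real i)"

definition G_deriv_integrand :: "real \<Rightarrow> nat \<Rightarrow> real \<Rightarrow> real \<Rightarrow> real" where
  "G_deriv_integrand \<theta> n t s = s * dickman_weight \<theta> s * power_deriv_coeff n s * t powr (s - 1 - real n)"

definition G_deriv :: "real \<Rightarrow> nat \<Rightarrow> real \<Rightarrow> real" where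
  "G_deriv \<theta> n t = (LINT s:{0<..}|lborel. G_deriv_integrand \<theta> n t s)"

lemma G_deriv_0: "G_deriv \<theta> 0 t = G \<theta> t"
  by (simp add: G_deriv_def G_def G_deriv_integrand_def dickman_weight_def power_deriv_coeff_def
      rGamma_inverse_Gamma divide_inverse mult_ac)

lemma power_deriv_coeff_Suc:
  "power_deriv_coeff (Suc n) s = power_deriv_coeff n s * (s - 1 - real n)"
  by (simp add: power_deriv_coeff_def)

lemma dickman_weight_pos: "0 \<le> s \<Longrightarrow> 0 < dickman_weight \<theta> s"
  by (simp add: dickman_weight_def rGamma_Suc_pos)

lemma abs_power_deriv_coeff_le: "0 \<le> s \<Longrightarrow> \<bar>power_deriv_coeff n s\<bar> \<le> fact n * exp (real n * s)"
proof (induction n)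
  case (Suc n)
  have "\<bar>s - 1 - real n\<bar> \<le> (1 + real n) * (1 + s)"
    using Suc.prems by (simp add: algebra_simps abs_le_iff)
  also have "\<dots> \<le> (1 + real n) * exp s"
    using exp_ge_add_one_self[of s] by (intro mult_left_mono) (auto simp: add.commute)
  finally have "\<bar>power_deriv_coeff n s\<bar> * \<bar>s - 1 - real n\<bar>
      \<le> (fact n * exp (real n * s)) * ((1 + real n) * exp s)"
    using Suc by (intro mult_mono) auto
  also have "\<dots> = fact (Suc n) * exp (real (Suc n) * s)"
    by (simp add: exp_add[symmetric] algebra_simps)
  finally show ?case
    by (simp add: power_deriv_coeff_Suc abs_mult)
qed (simp add: power_deriv_coeff_def)

lemma abs_G_deriv_integrand_le:
  assumes "0 < a" "a \<le> t" "t \<le> b" and s: "0 < s"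
  shows "\<bar>G_deriv_integrand \<theta> n t s\<bar>
    \<le> (fact n * a powr (-1 - real n)) * exp ((\<theta> - euler_mascheroni + 1 + real n + ln b) * s) * rGamma (s + 1)"
proof -
  have "s * dickman_weight \<theta> s \<le> exp s * dickman_weight \<theta> s"
    using s exp_ge_add_one_self[of s] dickman_weight_pos[of s \<theta>] by (intro mult_right_mono) linarith+
  also have "\<dots> = exp ((\<theta> - euler_mascheroni + 1) * s) * rGamma (s + 1)"
    by (simp add: dickman_weight_def exp_add[symmetric] algebra_simps)
  finally have weight: "s * dickman_weight \<theta> s \<le> exp ((\<theta> - euler_mascheroni + 1) * s) * rGamma (s + 1)" .
  have "s - 1 - real n = s + (-1 - real n)"
    by simp
  then have "t powr (s - 1 - real n) = t powr s * t powr (-1 - real n)"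
    by (simp only: powr_add)
  also have "\<dots> \<le> exp (ln b * s) * a powr (-1 - real n)"
    using assms by (intro mult_mono powr_mono2 powr_mono2') (auto simp: powr_def mult.commute)
  finally have tpow: "t powr (s - 1 - real n) \<le> exp (ln b * s) * a powr (-1 - real n)" .
  have "\<bar>G_deriv_integrand \<theta> n t s\<bar>
      = (s * dickman_weight \<theta> s) * \<bar>power_deriv_coeff n s\<bar> * t powr (s - 1 - real n)"
    using s dickman_weight_pos[of s \<theta>] by (simp add: G_deriv_integrand_def abs_mult)
  also have "\<dots> \<le> (exp ((\<theta> - euler_mascheroni + 1) * s) * rGamma (s + 1)) * (fact n * exp (real n * s))
          * (exp (ln b * s) * a powr (-1 - real n))"
    using s rGamma_Suc_pos[of s] by (intro mult_mono[OF mult_mono[OF weight abs_power_deriv_coeff_le] tpow]) auto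
  also have "\<dots> = (fact n * a powr (-1 - real n)) * exp ((\<theta> - euler_mascheroni + 1 + real n + ln b) * s) * rGamma (s + 1)"
    by (simp add: exp_add[symmetric] algebra_simps)
  finally show ?thesis .
qed

lemma set_integrable_G_deriv_integrand:
  assumes "0 < t"
  shows "set_integrable lborel {0<..} (G_deriv_integrand \<theta> n t)"
proof (rule set_integrable_exp_rGamma_bounded)
  show "continuous_on {0<..} (G_deriv_integrand \<theta> n t)"
    unfolding G_deriv_integrand_def dickman_weight_def power_deriv_coeff_def
    using assms by (intro continuous_intros continuous_at_imp_continuous_on ballI isCont_rGamma) auto
qed (use assms abs_G_deriv_integrand_le in blast)

lemma G_deriv_integrand_has_real_derivative:
  assumes "0 < t"
  shows "((\<lambda>t. G_deriv_integrand \<theta> n t s) has_real_derivative G_deriv_integrand \<theta> (Suc n) t s) (at t)"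
  unfolding G_deriv_integrand_def
  using assms by (auto intro!: derivative_eq_intros simp: power_deriv_coeff_Suc algebra_simps)

lemma has_real_derivative_G_deriv:
  assumes x: "0 < x"
  shows "(G_deriv \<theta> n has_real_derivative G_deriv \<theta> (Suc n) x) (at x)"
proof -
  define C where "C = fact (Suc n) * (x / 2) powr (-1 - real (Suc n))"
  define B where "B = \<theta> - euler_mascheroni + 1 + real (Suc n) + ln (2 * x)"
  have dominating: "set_integrable lborel {0<..} (\<lambda>s. C * exp (B * s) * rGamma (s + 1))"
    by (rule set_integrable_exp_rGamma_bounded[where C=C and B=B])
      (auto intro!: continuous_intros continuous_at_imp_continuous_on isCont_rGamma
        simp: C_def abs_mult abs_of_pos rGamma_Suc_pos)
  have "((\<lambda>t. LINT s:{0<..}|lborel. G_deriv_integrand \<theta> n t s) has_real_derivative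
      (LINT s:{0<..}|lborel. G_deriv_integrand \<theta> (Suc n) x s)) (at x)"
    unfolding set_lebesgue_integral_def
  proof (rule has_real_derivative_integral_dominated[where a="x / 2" and b="2 * x"
        and w="\<lambda>s. indicator {0<..} s *\<^sub>R (C * exp (B * s) * rGamma (s + 1))"])
    fix t s :: real
    assume t: "t \<in> {x / 2<..<2 * x}"
    then show "integrable lborel (\<lambda>s. indicator {0<..} s *\<^sub>R G_deriv_integrand \<theta> n t s)"
      using set_integrable_G_deriv_integrand[of t \<theta> n] x unfolding set_integrable_def by auto
    show "((\<lambda>t. indicator {0<..} s *\<^sub>R G_deriv_integrand \<theta> n t s) has_real_derivative
        indicator {0<..} s *\<^sub>R G_deriv_integrand \<theta> (Suc n) t s) (at t)"
      using t x by (auto intro!: DERIV_cmult G_deriv_integrand_has_real_derivative)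
    show "\<bar>indicator {0<..} s *\<^sub>R G_deriv_integrand \<theta> (Suc n) t s\<bar>
        \<le> indicator {0<..} s *\<^sub>R (C * exp (B * s) * rGamma (s + 1))"
      using abs_G_deriv_integrand_le[of "x / 2" t "2 * x" s \<theta> "Suc n"] t x
      by (auto split: split_indicator simp: C_def B_def)
  next
    show "(\<lambda>s. indicator {0<..} s *\<^sub>R G_deriv_integrand \<theta> (Suc n) x s) \<in> borel_measurable lborel"
      using set_integrable_G_deriv_integrand[OF x, of \<theta> "Suc n"]
      unfolding set_integrable_def by (rule borel_measurable_integrable)
  qed (use x dominating in \<open>auto simp: set_integrable_def\<close>)
  then show ?thesis
    unfolding G_deriv_def .
qed

lemma C_infinity_on_G: "C_infinity_on (G \<theta>) {0<..1}"
  unfolding C_infinity_on_def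
proof (intro exI[of _ "G_deriv \<theta>"] conjI ballI allI)
  show "G_deriv \<theta> 0 x = G \<theta> x" for x
    by (rule G_deriv_0)
  show "(G_deriv \<theta> n has_real_derivative G_deriv \<theta> (Suc n) x) (at x within {0<..1})"
    if "x \<in> {0<..1}" for n x
    using has_real_derivative_G_deriv[of x \<theta> n] that by (auto intro: has_field_derivative_at_within)
qed

lemma G_pos:
  assumes "0 < t"
  shows "0 < G \<theta> t"
proof -
  have "({0<..} :: real set) \<notin> null_sets lborel"
  proof
    assume "({0<..} :: real set) \<in> null_sets lborel"
    then have "{0<..<1 :: real} \<in> null_sets lborel"
      by (rule null_sets_subset) auto
    then show False
      by (simp add: null_sets_def)
  qed
  then show ?thesis
    unfolding G_deriv_0[symmetric] G_deriv_def
    using assms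
    by (intro set_integral_pos[OF set_integrable_G_deriv_integrand[OF assms]])
      (simp_all add: G_deriv_integrand_def power_deriv_coeff_def dickman_weight_pos)
qed

lemma dickman_weight_Taylor_near_0:
  obtains K where "\<And>s. s \<in> {0<..1} \<Longrightarrow> \<bar>dickman_weight \<theta> s - 1 - \<theta> * s\<bar> \<le> K * s\<^sup>2"
proof -
  define c where "c = \<theta> - euler_mascheroni"
  define w1 where "w1 s = dickman_weight \<theta> s * (c - Digamma (s + 1))" for s
  define w2 where "w2 s = dickman_weight \<theta> s * ((c - Digamma (s + 1))\<^sup>2 - Polygamma 1 (s + 1))" for s
  have not_pole: "s + 1 \<notin> \<int>\<^sub>\<le>\<^sub>0" if "0 \<le> s" for s :: real
    using that by (auto dest: nonpos_Ints_nonpos)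
  have w0: "(dickman_weight \<theta> has_real_derivative w1 s) (at s)" if "0 \<le> s" for s
    unfolding dickman_weight_def w1_def c_def
    by (rule derivative_eq_intros refl | use not_pole that in force)+ (simp add: algebra_simps)
  have "((\<lambda>s. c - Digamma (s + 1)) has_real_derivative - Polygamma 1 (s + 1)) (at s)" if "0 \<le> s" for s
    using has_field_derivative_Polygamma[OF not_pole[OF that], of 0] not_pole[OF that]
    by (auto intro!: derivative_eq_intros)
  then have w1': "(w1 has_real_derivative w2 s) (at s)" if "0 \<le> s" for s
    using w0[OF that] that unfolding w1_def[abs_def]
    by (auto intro!: derivative_eq_intros simp: w2_def w1_def power2_eq_square algebra_simps)
  have "continuous_on {0..1} w2"
    unfolding w2_def dickman_weight_def
    by (intro continuous_at_imp_continuous_on ballI continuous_intros isCont_rGamma)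
      (auto dest: nonpos_Ints_nonpos)
  then obtain M where M: "\<And>u. u \<in> {0..1} \<Longrightarrow> \<bar>w2 u\<bar> \<le> M"
    using compact_imp_bounded[OF compact_continuous_image[of "{0..1}" w2]]
    by (force simp: bounded_iff)
  show ?thesis
  proof
    fix s :: real
    assume s: "s \<in> {0<..1}"
    define d where "d m = (if m = 0 then dickman_weight \<theta> else if m = 1 then w1 else w2)" for m :: nat
    have "\<exists>u. 0 < u \<and> u < s \<and> dickman_weight \<theta> s = (\<Sum>m<2. d m 0 / fact m * s ^ m) + d 2 u / fact 2 * s ^ 2"
      using s by (intro Maclaurin) (auto simp: d_def less_2_cases_iff w0 w1')
    then obtain u where u: "0 < u" "u < s"
      and eq: "dickman_weight \<theta> s = 1 + \<theta> * s + w2 u / 2 * s\<^sup>2"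
      by (auto simp: d_def w1_def c_def dickman_weight_def numeral_2_eq_2)
    have "\<bar>dickman_weight \<theta> s - 1 - \<theta> * s\<bar> = \<bar>w2 u\<bar> / 2 * s\<^sup>2"
      using eq by (simp add: abs_mult)
    also have "\<dots> \<le> M / 2 * s\<^sup>2"
      using M[of u] u s by (intro mult_right_mono) auto
    finally show "\<bar>dickman_weight \<theta> s - 1 - \<theta> * s\<bar> \<le> M / 2 * s\<^sup>2" .
  qed
qed

lemma dickman_weight_le_exp: "0 \<le> s \<Longrightarrow> dickman_weight \<theta> s \<le> exp (\<bar>\<theta> - euler_mascheroni\<bar> * s) * exp 2"
  unfolding dickman_weight_def
  using rGamma_le_exp_powr[of s 1] rGamma_Suc_pos[of s] mult_right_mono[OF abs_ge_self, of s]
  by (intro mult_mono) auto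

lemma dickman_weight_Taylor_away_from_0:
  assumes "1 < s"
  shows "\<bar>dickman_weight \<theta> s - 1 - \<theta> * s\<bar>
    \<le> (exp 2 + 1 + \<bar>\<theta>\<bar>) * (s\<^sup>2 * exp (\<bar>\<theta> - euler_mascheroni\<bar> * s))"
proof -
  define E where "E = s\<^sup>2 * exp (\<bar>\<theta> - euler_mascheroni\<bar> * s)"
  have "s \<le> s\<^sup>2"
    using assms mult_left_mono[of 1 s s] by (simp add: power2_eq_square)
  then have E: "exp (\<bar>\<theta> - euler_mascheroni\<bar> * s) \<le> E" "s \<le> E"
    using assms mult_mono[of s "s\<^sup>2" 1 "exp (\<bar>\<theta> - euler_mascheroni\<bar> * s)"] unfolding E_def by simp_all
  have "\<bar>dickman_weight \<theta> s - 1 - \<theta> * s\<bar> \<le> dickman_weight \<theta> s + 1 + \<bar>\<theta>\<bar> * s"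
    using assms dickman_weight_pos[of s \<theta>] abs_mult_pos[of s \<theta>]
      abs_ge_self[of "\<theta> * s"] abs_ge_minus_self[of "\<theta> * s"]
    unfolding abs_le_iff by (simp add: mult.commute)
  also have "\<dots> \<le> E * exp 2 + E + \<bar>\<theta>\<bar> * E"
  proof -
    have "dickman_weight \<theta> s \<le> E * exp 2"
      using assms E(1) by (intro order.trans[OF dickman_weight_le_exp mult_right_mono]) simp_all
    then show ?thesis
      using E assms mult_left_mono[OF E(2), of "\<bar>\<theta>\<bar>"] by simp
  qed
  finally show ?thesis
    by (simp add: E_def algebra_simps)
qed

lemma dickman_weight_Taylor_bound:
  obtains K B where "0 \<le> K" "0 \<le> B"
    "\<And>s. 0 < s \<Longrightarrow> \<bar>dickman_weight \<theta> s - 1 - \<theta> * s\<bar> \<le> K * s\<^sup>2 * exp (B * s)"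
proof -
  obtain K0 where K0: "\<And>s. s \<in> {0<..1} \<Longrightarrow> \<bar>dickman_weight \<theta> s - 1 - \<theta> * s\<bar> \<le> K0 * s\<^sup>2"
    using dickman_weight_Taylor_near_0 by blast
  define B where "B = \<bar>\<theta> - euler_mascheroni\<bar>"
  define K where "K = \<bar>K0\<bar> + (exp 2 + 1 + \<bar>\<theta>\<bar>)"
  show ?thesis
  proof
    show "0 \<le> K" "0 \<le> B"
      by (simp_all add: K_def B_def add_nonneg_nonneg)
    fix s :: real
    assume s: "0 < s"
    have "1 \<le> exp (B * s)"
      using s by (simp add: B_def)
    then have E: "s\<^sup>2 \<le> s\<^sup>2 * exp (B * s)"
      using mult_left_mono[of 1 "exp (B * s)" "s\<^sup>2"] by simp
    show "\<bar>dickman_weight \<theta> s - 1 - \<theta> * s\<bar> \<le> K * s\<^sup>2 * exp (B * s)"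
    proof (cases "s \<le> 1")
      case True
      have "\<bar>dickman_weight \<theta> s - 1 - \<theta> * s\<bar> \<le> K0 * s\<^sup>2"
        using K0 s True by simp
      also have "\<dots> \<le> K * (s\<^sup>2 * exp (B * s))"
      proof (intro mult_mono E)
        show "K0 \<le> K" "0 \<le> K"
          using abs_ge_self[of K0] exp_gt_zero[of 2] abs_ge_zero[of \<theta>] unfolding K_def by linarith+
      qed simp_all
      finally show ?thesis
        by (simp add: mult.assoc)
    next
      case False
      then have "\<bar>dickman_weight \<theta> s - 1 - \<theta> * s\<bar> \<le> (exp 2 + 1 + \<bar>\<theta>\<bar>) * (s\<^sup>2 * exp (B * s))"
        unfolding B_def by (intro dickman_weight_Taylor_away_from_0) simp
      also have "\<dots> \<le> K * (s\<^sup>2 * exp (B * s))"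
        unfolding K_def by (intro mult_right_mono) auto
      finally show ?thesis
        by (simp add: mult.assoc)
    qed
  qed
qed

lemma
  fixes L \<theta> :: real
  assumes "0 < L"
  shows set_integrable_Laplace_linear: "set_integrable lborel {0<..} (\<lambda>s. s * (1 + \<theta> * s) * exp (- (L * s)))"
    and set_integral_Laplace_linear:
      "(LINT s:{0<..}|lborel. s * (1 + \<theta> * s) * exp (- (L * s))) = 1 / L\<^sup>2 + 2 * \<theta> / L ^ 3"
proof -
  have eq: "s * (1 + \<theta> * s) * exp (- (L * s)) = s ^ 1 * exp (- (L * s)) + \<theta> * (s ^ 2 * exp (- (L * s)))" for s
    by (simp add: power2_eq_square algebra_simps)
  note power_1 = set_integrable_power_times_exp[OF assms, of 1] set_integral_power_times_exp[OF assms, of 1]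
  note power_2 = set_integrable_power_times_exp[OF assms, of 2] set_integral_power_times_exp[OF assms, of 2]
  show "set_integrable lborel {0<..} (\<lambda>s. s * (1 + \<theta> * s) * exp (- (L * s)))"
    unfolding eq using power_1(1) power_2(1) by (intro set_integral_add set_integrable_mult_right)
  show "(LINT s:{0<..}|lborel. s * (1 + \<theta> * s) * exp (- (L * s))) = 1 / L\<^sup>2 + 2 * \<theta> / L ^ 3"
    unfolding eq using power_1 power_2
    by (simp add: set_integral_add set_integrable_mult_right numeral_2_eq_2 numeral_3_eq_3)
qed

lemma set_integral_Laplace_second_order:
  fixes \<phi> :: "real \<Rightarrow> real"
  assumes integrable: "set_integrable lborel {0<..} (\<lambda>s. s * \<phi> s * exp (- (L * s)))"
    and Taylor: "\<And>s. 0 < s \<Longrightarrow> \<bar>\<phi> s - 1 - \<theta> * s\<bar> \<le> K * s\<^sup>2 * exp (B * s)"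
    and "0 \<le> B" "B < L"
  shows "\<bar>(LINT s:{0<..}|lborel. s * \<phi> s * exp (- (L * s))) - 1 / L\<^sup>2 - 2 * \<theta> / L ^ 3\<bar>
    \<le> 6 * K / (L - B) ^ 4"
proof -
  have L: "0 < L" "0 < L - B"
    using assms by simp_all
  define R where "R s = s * \<phi> s * exp (- (L * s)) - s * (1 + \<theta> * s) * exp (- (L * s))" for s
  note power_3 = set_integrable_power_times_exp[OF L(2), of 3] set_integral_power_times_exp[OF L(2), of 3]
  have R_integrable: "set_integrable lborel {0<..} R"
    unfolding R_def using integrable set_integrable_Laplace_linear[OF L(1)] by (rule set_integral_diff)
  have R_integral: "(LINT s:{0<..}|lborel. R s)
      = (LINT s:{0<..}|lborel. s * \<phi> s * exp (- (L * s))) - 1 / L\<^sup>2 - 2 * \<theta> / L ^ 3"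
    unfolding R_def
    using integrable set_integrable_Laplace_linear[OF L(1)] set_integral_Laplace_linear[OF L(1)]
    by (simp add: set_integral_diff)
  have R_bound: "\<bar>R s\<bar> \<le> K * (s ^ 3 * exp (- ((L - B) * s)))" if "0 < s" for s
  proof -
    have "\<bar>R s\<bar> = s * \<bar>\<phi> s - 1 - \<theta> * s\<bar> * exp (- (L * s))"
      using that by (simp add: R_def abs_mult flip: left_diff_distrib right_diff_distrib)
    also have "\<dots> \<le> s * (K * s\<^sup>2 * exp (B * s)) * exp (- (L * s))"
      using Taylor[OF that] that by (intro mult_right_mono mult_left_mono) auto
    also have "\<dots> = K * (s ^ 3 * exp (- ((L - B) * s)))"
      by (simp add: power3_eq_cube power2_eq_square exp_add[symmetric] algebra_simps)
    finally show ?thesis .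
  qed
  have "\<bar>LINT s:{0<..}|lborel. R s\<bar> \<le> (LINT s:{0<..}|lborel. \<bar>R s\<bar>)"
    using set_integral_norm_bound[OF R_integrable] by simp
  also have "\<dots> \<le> (LINT s:{0<..}|lborel. K * (s ^ 3 * exp (- ((L - B) * s))))"
    using R_integrable power_3(1) R_bound
    by (intro set_integral_mono set_integrable_abs set_integrable_mult_right) auto
  also have "\<dots> = 6 * K / (L - B) ^ 4"
    using power_3(2) by (simp add: fact_numeral)
  finally show ?thesis
    unfolding R_integral .
qed

lemma G_as_Laplace_transform:
  assumes t: "0 < t"
  defines "L \<equiv> ln (1 / t)"
  shows "set_integrable lborel {0<..} (\<lambda>s. s * dickman_weight \<theta> s * exp (- (L * s)))"
    and "t * G \<theta> t = (LINT s:{0<..}|lborel. s * dickman_weight \<theta> s * exp (- (L * s)))"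
proof -
  have "t * G_deriv_integrand \<theta> 0 t s = s * dickman_weight \<theta> s * exp (- (L * s))" for s
  proof -
    have "t * t powr (s - 1) = t powr s"
      using t by (simp add: powr_diff)
    then show ?thesis
      using t by (simp add: G_deriv_integrand_def power_deriv_coeff_def L_def powr_def ln_div)
  qed
  then have eq: "(\<lambda>s. t * G_deriv_integrand \<theta> 0 t s) = (\<lambda>s. s * dickman_weight \<theta> s * exp (- (L * s)))"
    by (rule ext)
  show "set_integrable lborel {0<..} (\<lambda>s. s * dickman_weight \<theta> s * exp (- (L * s)))"
    unfolding eq[symmetric] using set_integrable_G_deriv_integrand[OF t]
    by (rule set_integrable_mult_right)
  show "t * G \<theta> t = (LINT s:{0<..}|lborel. s * dickman_weight \<theta> s * exp (- (L * s)))"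
    unfolding G_deriv_0[symmetric] G_deriv_def eq[symmetric] by (rule set_integral_mult_right[symmetric])
qed

lemma G_expansion_bound:
  assumes "0 \<le> B" and Taylor: "\<And>s. 0 < s \<Longrightarrow> \<bar>dickman_weight \<theta> s - 1 - \<theta> * s\<bar> \<le> K * s\<^sup>2 * exp (B * s)"
    and "0 \<le> K" and "0 < t" and L_ge: "2 * B + 1 \<le> ln (1 / t)"
  shows "\<bar>t * (ln (1 / t))\<^sup>2 * G \<theta> t - 1 - 2 * \<theta> / ln (1 / t)\<bar> \<le> 96 * K * (1 / (ln (1 / t))\<^sup>2)"
proof -
  define L where "L = ln (1 / t)"
  have L: "0 < L" "L / 2 \<le> L - B"
    using assms unfolding L_def by linarith+
  have "\<bar>t * G \<theta> t - 1 / L\<^sup>2 - 2 * \<theta> / L ^ 3\<bar> \<le> 6 * K / (L - B) ^ 4"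
    unfolding G_as_Laplace_transform(2)[OF \<open>0 < t\<close>, folded L_def]
    using G_as_Laplace_transform(1)[OF \<open>0 < t\<close>, folded L_def] Taylor \<open>0 \<le> B\<close> L
    by (intro set_integral_Laplace_second_order) auto
  also have "\<dots> \<le> 6 * K / (L / 2) ^ 4"
    using L \<open>0 \<le> K\<close> by (intro divide_left_mono power_mono mult_pos_pos) auto
  finally have "L\<^sup>2 * \<bar>t * G \<theta> t - 1 / L\<^sup>2 - 2 * \<theta> / L ^ 3\<bar> \<le> L\<^sup>2 * (6 * K / (L / 2) ^ 4)"
    by (rule mult_left_mono) simp
  moreover have "L\<^sup>2 * (t * G \<theta> t - 1 / L\<^sup>2 - 2 * \<theta> / L ^ 3) = t * L\<^sup>2 * G \<theta> t - 1 - 2 * \<theta> / L"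
    using L by (simp add: field_simps power2_eq_square power3_eq_cube)
  then have "L\<^sup>2 * \<bar>t * G \<theta> t - 1 / L\<^sup>2 - 2 * \<theta> / L ^ 3\<bar> = \<bar>t * L\<^sup>2 * G \<theta> t - 1 - 2 * \<theta> / L\<bar>"
    by (metis abs_mult abs_power2)
  ultimately show ?thesis
    using L by (simp add: L_def field_simps power2_eq_square power4_eq_xxxx)
qed

theorem mainTheorem5:
  fixes \<theta> :: real
  shows "C_infinity_on (G \<theta>) {0<..1}
    \<and> (\<forall>t\<in>{0<..1}. G \<theta> t > 0)
    \<and> (\<lambda>t. t * (ln (1/t))\<^sup>2 * G \<theta> t - 1 - 2 * \<theta> / ln (1/t))
        \<in> O[at_right 0](\<lambda>t. 1 / (ln (1/t))\<^sup>2)"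
proof (intro conjI ballI)
  show "C_infinity_on (G \<theta>) {0<..1}"
    by (rule C_infinity_on_G)
  show "0 < G \<theta> t" if "t \<in> {0<..1}" for t
    using that G_pos by auto
  obtain K B where K: "0 \<le> K" and B: "0 \<le> B"
    and Taylor: "\<And>s. 0 < s \<Longrightarrow> \<bar>dickman_weight \<theta> s - 1 - \<theta> * s\<bar> \<le> K * s\<^sup>2 * exp (B * s)"
    using dickman_weight_Taylor_bound by blast
  have "\<forall>\<^sub>F t in at_right 0. 2 * B + 1 \<le> ln (1 / t)"
    by real_asymp
  then have "\<forall>\<^sub>F t in at_right 0. \<bar>t * (ln (1/t))\<^sup>2 * G \<theta> t - 1 - 2 * \<theta> / ln (1/t)\<bar>
      \<le> 96 * K * \<bar>1 / (ln (1/t))\<^sup>2\<bar>"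
    using eventually_at_right_less[of 0]
    by eventually_elim (use G_expansion_bound[OF B Taylor K] in auto)
  then show "(\<lambda>t. t * (ln (1/t))\<^sup>2 * G \<theta> t - 1 - 2 * \<theta> / ln (1/t)) \<in> O[at_right 0](\<lambda>t. 1 / (ln (1/t))\<^sup>2)"
    by (intro bigoI) simp
qed

end
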